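(* Let $\mathcal{G}\subseteq C(\mathbb{R},\mathbb{R})$ be nonempty. The following conditions are equivalent: (1) $\{\mathrm{CL}(\mathbb{R})\cap\mathcal{P}(X):X\subseteq\mathbb{R}\}\subseteq\mathcal{K}_\mathcal{G}$; (2) $\{\mathcal{A}_x:x\in\mathbb{R}\}\subseteq\mathcal{K}_\mathcal{G}$, where $\mathcal{A}_x=\{E\in\mathrm{CL}(\mathbb{R}):x\notin E\}$; (3) for every $x\in\mathbb{R}$ there exists $f\in C(\mathbb{R},\mathbb{R})$ such that $E_\mathcal{G}(\{f\})=\mathcal{A}_x$.
   Context: $\mathrm{CL}(\mathbb{R})$ is the family of closed subsets of $\mathbb{R}$ and $\mathcal{P}(X)$ the power set of $X$. For $\mathcal{G}\subseteq C(\mathbb{R},\mathbb{R})$ let $R_\mathcal{G}=\{(f,E)\in C(\mathbb{R},\mathbb{R})\times\mathrm{CL}(\mathbb{R}):(\exists g\in\mathcal{G})\, f\restriction E=g\restriction E\}$; for $\mathcal{F}\subseteq C(\mathbb{R},\mathbb{R})$ put $E_\mathcal{G}(\mathcal{F})=\{E\in\mathrm{CL}(\mathbb{R}):(\forall f\in\mathcal{F})\,(f,E)\in R_\mathcal{G}\}$, and let $\mathcal{K}_\mathcal{G}=\{E_\mathcal{G}(\mathcal{F}):\mathcal{F}\subseteq C(\mathbb{R},\mathbb{R})\}$. *)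

theory Defs
  imports "HOL-Analysis.Analysis"
begin

definition CRR :: "(real \<Rightarrow> real) set" where
  "CRR = {f. continuous_on UNIV f}"

definition CL :: "real set set" where
  "CL = {E. closed E}"

definition R_rel :: "(real \<Rightarrow> real) set \<Rightarrow> ((real \<Rightarrow> real) \<times> real set) set" where
  "R_rel G = {(f, E). f \<in> CRR \<and> E \<in> CL \<and> (\<exists>g\<in>G. \<forall>x\<in>E. f x = g x)}"

definition E_op :: "(real \<Rightarrow> real) set \<Rightarrow> (real \<Rightarrow> real) set \<Rightarrow> real set set" where
  "E_op G F = {E \<in> CL. \<forall>f\<in>F. (f, E) \<in> R_rel G}"

definition K_fam :: "(real \<Rightarrow> real) set \<Rightarrow> real set set set" where
  "K_fam G = {E_op G F | F. F \<subseteq> CRR}"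

definition A_pt :: "real \<Rightarrow> real set set" where
  "A_pt x = {E \<in> CL. x \<notin> E}"

end

theory Submission
  imports Defs
begin

text \<open>A family \<open>E\<^sub>\<G>(\<F>)\<close> is the intersection of the families \<open>E\<^sub>\<G>({f})\<close>, \<open>f \<in> \<F>\<close>, so
  \<open>\<K>\<^sub>\<G>\<close> is closed under intersections; since \<open>CL(\<real>) \<inter> \<P>(X)\<close> is the intersection of
  the \<open>\<A>\<^sub>x\<close> with \<open>x \<notin> X\<close>, (2) implies (1). If \<open>\<A>\<^sub>x = E\<^sub>\<G>(\<F>)\<close>, then \<open>{x} \<notin> E\<^sub>\<G>(\<F>)\<close>
  yields some \<open>f \<in> \<F>\<close> whose value at \<open>x\<close> is attained by no \<open>g \<in> \<G>\<close>; this single \<open>f\<close>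
  already excludes every closed set through \<open>x\<close>, which gives (3).\<close>

lemma E_op_UN: "E_op G (\<Union>i\<in>I. F i) = CL \<inter> (\<Inter>i\<in>I. E_op G (F i))"
  unfolding E_op_def by blast

lemma E_op_antimono: "F' \<subseteq> F \<Longrightarrow> E_op G F \<subseteq> E_op G F'"
  unfolding E_op_def by blast

lemma K_fam_INT_closed:
  assumes "\<And>i. i \<in> I \<Longrightarrow> S i \<in> K_fam G"
  shows "CL \<inter> (\<Inter>i\<in>I. S i) \<in> K_fam G"
proof -
  have "\<forall>i\<in>I. \<exists>F. F \<subseteq> CRR \<and> S i = E_op G F"
    using assms unfolding K_fam_def by blast
  then obtain F where F: "\<And>i. i \<in> I \<Longrightarrow> F i \<subseteq> CRR \<and> S i = E_op G (F i)"
    by metis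
  then have "CL \<inter> (\<Inter>i\<in>I. S i) = E_op G (\<Union>i\<in>I. F i)"
    by (simp add: E_op_UN)
  moreover have "(\<Union>i\<in>I. F i) \<subseteq> CRR"
    using F by blast
  ultimately show ?thesis
    unfolding K_fam_def by blast
qed

lemma A_pt_eq_CL_Pow: "A_pt x = CL \<inter> Pow (- {x})"
  unfolding A_pt_def by blast

lemma CL_Pow_eq_INT_A_pt: "CL \<inter> Pow X = CL \<inter> (\<Inter>x\<in>- X. A_pt x)"
  unfolding A_pt_def by blast

lemma singleton_in_E_op_iff:
  "{x} \<in> E_op G F \<longleftrightarrow> F \<subseteq> CRR \<and> (\<forall>f\<in>F. \<exists>g\<in>G. f x = g x)"
  unfolding E_op_def R_rel_def CL_def by auto

lemma E_op_singleton_subset_A_pt: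
  assumes "\<forall>g\<in>G. f x \<noteq> g x"
  shows "E_op G {f} \<subseteq> A_pt x"
proof
  fix E
  assume "E \<in> E_op G {f}"
  then obtain g where "E \<in> CL" "g \<in> G" "\<forall>y\<in>E. f y = g y"
    unfolding E_op_def R_rel_def by blast
  with assms show "E \<in> A_pt x"
    unfolding A_pt_def by blast
qed

lemma A_pt_in_K_fam_iff:
  "A_pt x \<in> K_fam G \<longleftrightarrow> (\<exists>f\<in>CRR. E_op G {f} = A_pt x)"
proof
  assume "A_pt x \<in> K_fam G"
  then obtain F where F: "F \<subseteq> CRR" "E_op G F = A_pt x"
    unfolding K_fam_def by blast
  have "{x} \<notin> A_pt x"
    unfolding A_pt_def by blast
  then obtain f where f: "f \<in> F" "\<forall>g\<in>G. f x \<noteq> g x"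
    using F singleton_in_E_op_iff[of x G F] by blast
  have "A_pt x \<subseteq> E_op G {f}"
    using F(2) f(1) E_op_antimono[of "{f}" F G] by blast
  with E_op_singleton_subset_A_pt[of G f x] f(2) have "E_op G {f} = A_pt x"
    by blast
  with f(1) F(1) show "\<exists>f\<in>CRR. E_op G {f} = A_pt x"
    by blast
next
  assume "\<exists>f\<in>CRR. E_op G {f} = A_pt x"
  then show "A_pt x \<in> K_fam G"
    unfolding K_fam_def by blast
qed

theorem theorem4p2:
  fixes G :: "(real \<Rightarrow> real) set"
  assumes "G \<subseteq> CRR" and "G \<noteq> {}"
  shows "({CL \<inter> Pow X | X. X \<subseteq> (UNIV :: real set)} \<subseteq> K_fam G
           \<longleftrightarrow> {A_pt x | x. x \<in> (UNIV :: real set)} \<subseteq> K_fam G)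
       \<and> ({A_pt x | x. x \<in> (UNIV :: real set)} \<subseteq> K_fam G
           \<longleftrightarrow> (\<forall>x::real. \<exists>f\<in>CRR. E_op G {f} = A_pt x))"
proof -
  have "{A_pt x | x. x \<in> UNIV} \<subseteq> K_fam G \<longleftrightarrow> (\<forall>x. A_pt x \<in> K_fam G)"
    by blast
  moreover have "{CL \<inter> Pow X | X. X \<subseteq> UNIV} \<subseteq> K_fam G \<longleftrightarrow> (\<forall>x. A_pt x \<in> K_fam G)"
  proof
    assume "{CL \<inter> Pow X | X. X \<subseteq> UNIV} \<subseteq> K_fam G"
    then show "\<forall>x. A_pt x \<in> K_fam G"
      unfolding A_pt_eq_CL_Pow by blast
  next
    assume "\<forall>x. A_pt x \<in> K_fam G"
    then show "{CL \<inter> Pow X | X. X \<subseteq> UNIV} \<subseteq> K_fam G"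
      using K_fam_INT_closed[of "- _" A_pt G] unfolding CL_Pow_eq_INT_A_pt by blast
  qed
  ultimately show ?thesis
    by (simp add: A_pt_in_K_fam_iff)
qed

end
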